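(* Let $(V,g,J)$ be a pseudo-hermitian vector space, $A:V\to V$ a hermitian endomorphism, $p$ a polynomial with real coefficients and $B=p(A)$. Suppose a linear operator $R:\mathfrak{u}(g,J)\to\mathfrak{u}(g,J)$ satisfies $[R(X),A]=[X,B]$ for all $X\in\mathfrak{u}(g,J)$. Then: (1) for any real eigenvalues $\lambda_i\neq\lambda_j$ of $A$, the number $\frac{p(\lambda_i)-p(\lambda_j)}{\lambda_i-\lambda_j}$ is an eigenvalue of $R$; (2) if $A$ has a non-trivial Jordan block with real eigenvalue $\lambda_i$, then $p'(\lambda_i)$ is an eigenvalue of $R$.
   Context: A pseudo-hermitian vector space $(V,g,J)$ is a real vector space with a complex structure $J$ and a non-degenerate inner product $g$ (any signature) with $g(Ju,Jv)=g(u,v)$. An endomorphism is hermitian if it is $g$-selfadjoint and commutes with $J$. $\mathfrak{u}(g,J)=\{X\in\mathfrak{gl}(V):[X,J]=0,\ g(Xu,v)=-g(u,Xv)\}$. *)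

theory Defs
  imports "Jordan_Normal_Form.Jordan_Normal_Form" "Jordan_Normal_Form.Char_Poly"
begin

text \<open>A pseudo-hermitian vector space of real dimension n, in coordinates:
  V = R^n, the inner product g(u,v) = u^T G v with G symmetric and invertible
  (any signature), the complex structure J with J^2 = -1, and g(Ju,Jv) = g(u,v).\<close>
definition pseudo_hermitian :: "nat \<Rightarrow> real mat \<Rightarrow> real mat \<Rightarrow> bool" where
  "pseudo_hermitian n G J \<longleftrightarrow>
     G \<in> carrier_mat n n \<and> J \<in> carrier_mat n n \<and>
     transpose_mat G = G \<and> det G \<noteq> 0 \<and>
     J * J = - (1\<^sub>m n) \<and>
     transpose_mat J * G * J = G"

definition hermitian_endo :: "nat \<Rightarrow> real mat \<Rightarrow> real mat \<Rightarrow> real mat \<Rightarrow> bool" where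
  "hermitian_endo n G J A \<longleftrightarrow>
     A \<in> carrier_mat n n \<and> transpose_mat A * G = G * A \<and> A * J = J * A"

definition u_alg :: "nat \<Rightarrow> real mat \<Rightarrow> real mat \<Rightarrow> real mat set" where
  "u_alg n G J = {X \<in> carrier_mat n n. X * J = J * X \<and> transpose_mat X * G = - (G * X)}"

definition commutator :: "'a::comm_ring_1 mat \<Rightarrow> 'a mat \<Rightarrow> 'a mat" where
  "commutator X Y = X * Y - Y * X"

definition poly_mat :: "nat \<Rightarrow> 'a::comm_ring_1 poly \<Rightarrow> 'a mat \<Rightarrow> 'a mat" where
  "poly_mat n p A = foldr (\<lambda>c M. c \<cdot>\<^sub>m 1\<^sub>m n + A * M) (coeffs p) (0\<^sub>m n n)"

definition linear_on :: "real mat set \<Rightarrow> (real mat \<Rightarrow> real mat) \<Rightarrow> bool" where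
  "linear_on U R \<longleftrightarrow> (\<forall>X\<in>U. R X \<in> U) \<and>
     (\<forall>X\<in>U. \<forall>Y\<in>U. \<forall>a b. R (a \<cdot>\<^sub>m X + b \<cdot>\<^sub>m Y) = a \<cdot>\<^sub>m R X + b \<cdot>\<^sub>m R Y)"

definition op_eigenvalue :: "nat \<Rightarrow> real mat set \<Rightarrow> (real mat \<Rightarrow> real mat) \<Rightarrow> real \<Rightarrow> bool" where
  "op_eigenvalue n U R mu \<longleftrightarrow> (\<exists>X\<in>U. X \<noteq> 0\<^sub>m n n \<and> R X = mu \<cdot>\<^sub>m X)"

definition has_nontrivial_jordan_block :: "real mat \<Rightarrow> real \<Rightarrow> bool" where
  "has_nontrivial_jordan_block A lam \<longleftrightarrow>
     (\<exists>n_as. jordan_nf (map_mat complex_of_real A) n_as \<and>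
        (\<exists>k. (k, complex_of_real lam) \<in> set n_as \<and> k \<ge> 2))"

end

theory Submission
  imports Defs "HOL-Library.Function_Algebras" "Jordan_Normal_Form.Jordan_Normal_Form_Uniqueness"
begin

text \<open>
  For eigenvectors \<open>a\<close>, \<open>b\<close> of \<open>A\<close> with eigenvalues \<open>\<lambda> \<noteq> \<mu>\<close>, the element
  \<open>X = herm_dyad a b - herm_dyad b a\<close> of \<open>u(g,J)\<close> satisfies \<open>[X, p(A)] = (p(\<lambda>) - p(\<mu>)) S\<close> and
  \<open>[X, A] = (\<lambda> - \<mu>) S\<close> with \<open>S = herm_dyad a b + herm_dyad b a \<noteq> 0\<close>; for a Jordan chain
  \<open>A v = \<lambda> v + w\<close>, \<open>A w = \<lambda> w\<close> the element \<open>X = herm_dyad w v - herm_dyad v w\<close> satisfies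
  \<open>[X, p(A)] = p'(\<lambda>) [X, A]\<close>. In both cases \<open>[X, B] = \<nu> [X, A] \<noteq> 0\<close> for the claimed number \<open>\<nu>\<close>.
  The hypothesis \<open>[R Y, A] = [Y, B]\<close> makes \<open>R\<close> preserve the centralizer \<open>W\<close> of \<open>A\<close> in \<open>u(g,J)\<close>
  and puts \<open>R X - \<nu> X\<close> into \<open>W\<close>, while \<open>X \<notin> W\<close>. If \<open>\<nu>\<close> were not an eigenvalue of \<open>R\<close>,
  then \<open>R - \<nu>\<close> would be injective on \<open>u(g,J)\<close>, hence bijective on the finite-dimensional
  invariant space \<open>W\<close>, which would force \<open>X \<in> W\<close>.
\<close>

section \<open>Injective endomorphisms of finite-dimensional matrix spaces\<close>

lemma (in vector_space) inj_on_endomorphism_subspace_surj: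
  assumes S: "subspace S" and E: "finite E" "S \<subseteq> span E"
    and f_maps: "f ` S \<subseteq> S"
    and f_lin: "\<And>x y a b. x \<in> S \<Longrightarrow> y \<in> S \<Longrightarrow> f (a *s x + b *s y) = a *s f x + b *s f y"
    and f_inj: "inj_on f S"
  shows "f ` S = S"
proof -
  obtain B where B: "B \<subseteq> S" "independent B" "S \<subseteq> span B"
    using maximal_independent_subset[of S] by blast
  have "finite B"
    using independent_span_bound[OF E(1) B(2)] B(1) E(2) by auto
  have span_B: "span B = S"
    using span_subspace[OF B(1) B(3) S] .
  \<comment> \<open>\<open>f\<close> is linear only on \<open>S\<close>; its linear extension from a basis of \<open>S\<close> gives access to
    the library facts about linear maps.\<close>
  interpret p: vector_space_pair scale scale ..
  define g where "g = p.construct B f"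
  have g: "Vector_Spaces.linear scale scale g"
    unfolding g_def using B(2) by (rule p.linear_construct)
  interpret g: Vector_Spaces.linear scale scale g by (fact g)
  have g_basis: "g b = f b" if "b \<in> B" for b
    unfolding g_def using B(2) that by (rule p.construct_basis)
  have g_eq_f: "g x = f x" if "x \<in> S" for x
  proof -
    have "x \<in> span B" using that span_B by simp
    then have "x \<in> S \<and> g x = f x"
    proof (induction rule: span_induct_alt)
      case base
      have "f 0 = f (0 *s 0 + 0 *s 0)" by simp
      also have "\<dots> = 0" using f_lin[of 0 0 0 0] subspace_0[OF S] by simp
      finally show ?case using subspace_0[OF S] by simp
    next
      case (step c x y)
      have "x \<in> S" using step B(1) by blast
      have "c *s x + y \<in> S"
        using S \<open>x \<in> S\<close> step by (blast intro: subspace_add subspace_scale)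
      moreover have "g (c *s x + y) = f (c *s x + y)"
      proof -
        have "g (c *s x + y) = c *s f x + 1 *s f y"
          using step g_basis by (simp add: g.add g.scale)
        also have "\<dots> = f (c *s x + 1 *s y)"
          using f_lin[of x y c 1] \<open>x \<in> S\<close> step by simp
        finally show ?thesis by simp
      qed
      ultimately show ?case by blast
    qed
    then show ?thesis by simp
  qed
  have g_inj: "inj_on g (span B)"
    using inj_on_cong[of S g f] g_eq_f f_inj span_B by simp
  have gB_indep: "independent (g ` B)"
    using B(2) g_inj by (rule p.linear_independent_injective_image[OF g])
  have card_gB: "card (g ` B) = card B"
    using card_image inj_on_subset[OF g_inj span_superset] by blast
  have "S \<subseteq> span (g ` B)"
  proof
    fix w assume "w \<in> S"
    show "w \<in> span (g ` B)"
    proof (rule ccontr)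
      assume w: "w \<notin> span (g ` B)"
      have "independent (insert w (g ` B))"
        using w gB_indep by (rule independent_insertI)
      moreover have "g ` B \<subseteq> S"
        using B(1) f_maps g_eq_f by auto
      then have "insert w (g ` B) \<subseteq> span B"
        using \<open>w \<in> S\<close> span_B by simp
      ultimately have "card (insert w (g ` B)) \<le> card B"
        using independent_span_bound[OF \<open>finite B\<close>] by blast
      moreover have "w \<notin> g ` B" using w span_base by blast
      ultimately show False
        using card_gB \<open>finite B\<close> by simp
    qed
  qed
  also have "span (g ` B) = g ` S"
    using p.linear_span_image[OF g] span_B by simp
  also have "\<dots> = f ` S"
    using g_eq_f by simp
  finally show ?thesis using f_maps by blast
qed

text \<open>The real vector space of functions \<open>nat \<times> nat \<Rightarrow> real\<close> provides the dimension theory of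
  \<open>vector_space\<close>; \<open>mat_coords n\<close> embeds the \<open>n \<times> n\<close> matrices into it linearly.\<close>

interpretation coord_vs: vector_space "\<lambda>(c::real) (f::nat \<times> nat \<Rightarrow> real) x. c * f x"
  by unfold_locales (auto simp: fun_eq_iff algebra_simps)

lemma sum_fun_apply: "(\<Sum>a\<in>A. g a) x = (\<Sum>a\<in>A. g a x)"
  by (induction A rule: infinite_finite_induct) auto

definition mat_coords :: "nat \<Rightarrow> real mat \<Rightarrow> nat \<times> nat \<Rightarrow> real" where
  "mat_coords n X = (\<lambda>(i, j). if i < n \<and> j < n then X $$ (i, j) else 0)"

lemma mat_mat_coords: "X \<in> carrier_mat n n \<Longrightarrow> mat n n (mat_coords n X) = X"
  unfolding mat_coords_def by (intro eq_matI) auto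

lemma inj_on_mat_coords: "inj_on (mat_coords n) (carrier_mat n n)"
  by (metis inj_onI mat_mat_coords)

lemma mat_coords_lincomb:
  "X \<in> carrier_mat n n \<Longrightarrow> Y \<in> carrier_mat n n \<Longrightarrow>
    mat_coords n (a \<cdot>\<^sub>m X + b \<cdot>\<^sub>m Y) = (\<lambda>q. a * mat_coords n X q) + (\<lambda>q. b * mat_coords n Y q)"
  unfolding mat_coords_def by (auto simp: fun_eq_iff)

lemma mat_coords_in_span:
  assumes "X \<in> carrier_mat n n"
  shows "mat_coords n X \<in> coord_vs.span ((\<lambda>p q. if q = p then 1 else 0) ` ({..<n} \<times> {..<n}))"
proof -
  let ?e = "\<lambda>p q. if q = p then 1 else 0 :: real"
  have "mat_coords n X = (\<Sum>p\<in>{..<n} \<times> {..<n}. (\<lambda>q. X $$ p * ?e p q))" (is "_ = ?s")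
  proof
    fix q :: "nat \<times> nat"
    have "?s q = (\<Sum>p\<in>{..<n} \<times> {..<n}. if q = p then X $$ p else 0)"
      unfolding sum_fun_apply by (intro sum.cong) auto
    also have "\<dots> = mat_coords n X q"
      by (cases q) (simp add: mat_coords_def)
    finally show "mat_coords n X q = ?s q" ..
  qed
  also have "\<dots> \<in> coord_vs.span (?e ` ({..<n} \<times> {..<n}))"
    by (intro coord_vs.span_sum coord_vs.span_scale coord_vs.span_base) auto
  finally show ?thesis .
qed

definition mat_subspace :: "nat \<Rightarrow> real mat set \<Rightarrow> bool" where
  "mat_subspace n W \<longleftrightarrow> W \<subseteq> carrier_mat n n \<and> 0\<^sub>m n n \<in> W \<and>
     (\<forall>X\<in>W. \<forall>Y\<in>W. \<forall>a b. a \<cdot>\<^sub>m X + b \<cdot>\<^sub>m Y \<in> W)"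

lemma coord_vs_subspace_mat_coords_image:
  assumes "mat_subspace n W"
  shows "coord_vs.subspace (mat_coords n ` W)"
  unfolding coord_vs.subspace_def
proof (intro conjI ballI allI)
  have W: "W \<subseteq> carrier_mat n n" "0\<^sub>m n n \<in> W"
    and lincomb: "\<And>X Y a b. X \<in> W \<Longrightarrow> Y \<in> W \<Longrightarrow> a \<cdot>\<^sub>m X + b \<cdot>\<^sub>m Y \<in> W"
    using assms unfolding mat_subspace_def by auto
  have image_lincomb: "(\<lambda>q. a * x q) + (\<lambda>q. b * y q) \<in> mat_coords n ` W"
    if x: "x \<in> mat_coords n ` W" and y: "y \<in> mat_coords n ` W" for x y a b
  proof -
    obtain X Y where XY: "X \<in> W" "Y \<in> W" and "x = mat_coords n X" "y = mat_coords n Y"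
      using x y by blast
    moreover have "mat_coords n (a \<cdot>\<^sub>m X + b \<cdot>\<^sub>m Y) = (\<lambda>q. a * mat_coords n X q) + (\<lambda>q. b * mat_coords n Y q)"
      using W(1) XY by (intro mat_coords_lincomb) auto
    ultimately show ?thesis using lincomb[OF XY] by (metis image_eqI)
  qed
  show "0 \<in> mat_coords n ` W"
    using image_lincomb[of _ _ 0 0] W by (auto simp: zero_fun_def plus_fun_def)
  show "x + y \<in> mat_coords n ` W" if "x \<in> mat_coords n ` W" "y \<in> mat_coords n ` W" for x y
    using image_lincomb[OF that, of 1 1] by simp
  show "(\<lambda>q. c * x q) \<in> mat_coords n ` W" if "x \<in> mat_coords n ` W" for c x
    using image_lincomb[OF that that, of c 0] by (simp add: plus_fun_def)
qed

lemma inj_on_imp_surj_on_mat_subspace: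
  assumes W: "mat_subspace n W" and T: "linear_on W T" and T_inj: "inj_on T W"
  shows "T ` W = W"
proof -
  have W_carrier: "W \<subseteq> carrier_mat n n"
    using W unfolding mat_subspace_def by blast
  have T_maps: "T ` W \<subseteq> W"
    and T_lin: "\<And>X Y a b. X \<in> W \<Longrightarrow> Y \<in> W \<Longrightarrow> T (a \<cdot>\<^sub>m X + b \<cdot>\<^sub>m Y) = a \<cdot>\<^sub>m T X + b \<cdot>\<^sub>m T Y"
    using T unfolding linear_on_def by auto
  define f where "f x = mat_coords n (T (mat n n x))" for x
  have f_coords: "f (mat_coords n X) = mat_coords n (T X)" if "X \<in> W" for X
    unfolding f_def using that W_carrier mat_mat_coords by auto
  have "f ` mat_coords n ` W = mat_coords n ` W"
  proof (rule coord_vs.inj_on_endomorphism_subspace_surj)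
    show "coord_vs.subspace (mat_coords n ` W)"
      using W by (rule coord_vs_subspace_mat_coords_image)
    show "mat_coords n ` W \<subseteq> coord_vs.span ((\<lambda>p q. if q = p then 1 else 0) ` ({..<n} \<times> {..<n}))"
      using W_carrier mat_coords_in_span by blast
    show "f ` mat_coords n ` W \<subseteq> mat_coords n ` W"
      using T_maps f_coords by auto
    show "f ((\<lambda>q. a * x q) + (\<lambda>q. b * y q)) = (\<lambda>q. a * f x q) + (\<lambda>q. b * f y q)"
      if xy: "x \<in> mat_coords n ` W" "y \<in> mat_coords n ` W" for x y a b
    proof -
      obtain X Y where XY: "X \<in> W" "Y \<in> W" and xy_coords: "x = mat_coords n X" "y = mat_coords n Y"
        using xy by blast
      have carrier: "X \<in> carrier_mat n n" "Y \<in> carrier_mat n n" "T X \<in> carrier_mat n n" "T Y \<in> carrier_mat n n"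
        using XY T_maps W_carrier by auto
      have "a \<cdot>\<^sub>m X + b \<cdot>\<^sub>m Y \<in> W"
        using W XY unfolding mat_subspace_def by blast
      have "f ((\<lambda>q. a * x q) + (\<lambda>q. b * y q)) = f (mat_coords n (a \<cdot>\<^sub>m X + b \<cdot>\<^sub>m Y))"
        unfolding xy_coords mat_coords_lincomb[OF carrier(1,2)] ..
      also have "\<dots> = mat_coords n (a \<cdot>\<^sub>m T X + b \<cdot>\<^sub>m T Y)"
        using f_coords[OF \<open>a \<cdot>\<^sub>m X + b \<cdot>\<^sub>m Y \<in> W\<close>] T_lin[OF XY] by simp
      also have "\<dots> = (\<lambda>q. a * f x q) + (\<lambda>q. b * f y q)"
        unfolding mat_coords_lincomb[OF carrier(3,4)] xy_coords f_coords[OF XY(1)] f_coords[OF XY(2)] ..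
      finally show ?thesis .
    qed
    show "inj_on f (mat_coords n ` W)"
    proof (rule inj_onI)
      fix x y assume "x \<in> mat_coords n ` W" "y \<in> mat_coords n ` W" and f_eq: "f x = f y"
      then obtain X Y where XY: "X \<in> W" "Y \<in> W" and xy_coords: "x = mat_coords n X" "y = mat_coords n Y"
        by blast
      have "mat_coords n (T X) = mat_coords n (T Y)"
        using f_eq f_coords[OF XY(1)] f_coords[OF XY(2)] xy_coords by simp
      then have "T X = T Y"
        using T_maps W_carrier XY by (intro inj_onD[OF inj_on_mat_coords]) auto
      then show "x = y"
        using T_inj XY xy_coords by (simp add: inj_on_eq_iff)
    qed
  qed simp
  moreover have "f ` mat_coords n ` W = mat_coords n ` T ` W"
    using f_coords by (simp add: image_image)
  ultimately have "mat_coords n ` T ` W = mat_coords n ` W"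
    by simp
  then show ?thesis
    using inj_on_image_eq_iff[OF inj_on_mat_coords] T_maps W_carrier by (meson order_trans)
qed

section \<open>Matrix subspaces and an eigenvalue criterion\<close>

lemma mult_carrier_mat_square [simp]:
  "A \<in> carrier_mat n n \<Longrightarrow> B \<in> carrier_mat n n \<Longrightarrow> A * B \<in> carrier_mat n n"
  and mult_mat_vec_carrier_square [simp]:
  "A \<in> carrier_mat n n \<Longrightarrow> v \<in> carrier_vec n \<Longrightarrow> A *\<^sub>v v \<in> carrier_vec n"
  by auto

lemma mult_mat_vec_eq_if_mult_eq:
  assumes "A \<in> carrier_mat n n" "B \<in> carrier_mat n n" "C \<in> carrier_mat n n" "D \<in> carrier_mat n n"
    and "v \<in> carrier_vec n" and "A * B = C * D"
  shows "A *\<^sub>v (B *\<^sub>v v) = C *\<^sub>v (D *\<^sub>v v)"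
  using assms by (metis assoc_mult_mat_vec)

lemma smult_mat_mult_vec:
  "A \<in> carrier_mat nr nc \<Longrightarrow> v \<in> carrier_vec nc \<Longrightarrow>
    (k \<cdot>\<^sub>m A) *\<^sub>v v = k \<cdot>\<^sub>v (A *\<^sub>v (v :: 'a :: comm_ring_1 vec))"
  by (intro eq_vecI) (auto simp: scalar_prod_def sum_distrib_left mult.assoc)

lemma mat_diff_eq_zero_iff:
  assumes "A \<in> carrier_mat nr nc" "B \<in> carrier_mat nr nc"
  shows "A - B = 0\<^sub>m nr nc \<longleftrightarrow> A = (B :: 'a :: ab_group_add mat)"
proof
  assume diff: "A - B = 0\<^sub>m nr nc"
  show "A = B"
  proof (rule eq_matI)
    fix i j assume "i < dim_row B" "j < dim_col B"
    then show "A $$ (i, j) = B $$ (i, j)"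
      using arg_cong[OF diff, of "\<lambda>M. M $$ (i, j)"] assms by simp
  qed (use assms in auto)
qed (use assms in simp)

lemma smult_mat_eq_zero_iff:
  assumes "M \<in> carrier_mat nr nc"
  shows "c \<cdot>\<^sub>m M = 0\<^sub>m nr nc \<longleftrightarrow> c = 0 \<or> M = (0\<^sub>m nr nc :: 'a :: idom mat)"
proof
  assume zero: "c \<cdot>\<^sub>m M = 0\<^sub>m nr nc"
  show "c = 0 \<or> M = 0\<^sub>m nr nc"
  proof (cases "c = 0")
    case False
    have "M = 0\<^sub>m nr nc"
    proof (rule eq_matI)
      fix i j assume "i < dim_row (0\<^sub>m nr nc :: 'a mat)" "j < dim_col (0\<^sub>m nr nc :: 'a mat)"
      then show "M $$ (i, j) = 0\<^sub>m nr nc $$ (i, j)"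
        using arg_cong[OF zero, of "\<lambda>A. A $$ (i, j)"] assms False by auto
    qed (use assms in auto)
    then show ?thesis ..
  qed simp
qed (use assms in auto)

lemma scalar_prod_self_pos:
  assumes "x \<in> carrier_vec n" "x \<noteq> 0\<^sub>v n"
  shows "x \<bullet> x > (0 :: real)"
proof -
  obtain i where "i < n" "x $ i \<noteq> 0"
    using assms eq_vecI[of x "0\<^sub>v n"] by auto
  then show ?thesis
    unfolding scalar_prod_def using assms
    by (intro sum_pos2[of _ i]) (auto simp: zero_less_mult_iff)
qed

lemma commutator_carrier [simp]:
  "X \<in> carrier_mat n n \<Longrightarrow> A \<in> carrier_mat n n \<Longrightarrow> commutator X A \<in> carrier_mat n n"
  unfolding commutator_def by (simp add: minus_carrier_mat)

lemma commutator_eq_zero_iff: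
  "X \<in> carrier_mat n n \<Longrightarrow> A \<in> carrier_mat n n \<Longrightarrow> commutator X A = 0\<^sub>m n n \<longleftrightarrow> X * A = A * X"
  unfolding commutator_def by (simp add: mat_diff_eq_zero_iff[of _ n n])

lemma mat_subspace_centralizer:
  assumes U: "mat_subspace n U" and A: "A \<in> carrier_mat n n"
  shows "mat_subspace n {Y \<in> U. Y * A = A * Y}"
  unfolding mat_subspace_def
proof (intro conjI ballI allI)
  show "{Y \<in> U. Y * A = A * Y} \<subseteq> carrier_mat n n" "0\<^sub>m n n \<in> {Y \<in> U. Y * A = A * Y}"
    using U A unfolding mat_subspace_def by auto
next
  fix X Y a b assume "X \<in> {Y \<in> U. Y * A = A * Y}" "Y \<in> {Y \<in> U. Y * A = A * Y}"
  then have "X \<in> U" "Y \<in> U" "X \<in> carrier_mat n n" "Y \<in> carrier_mat n n" "X * A = A * X" "Y * A = A * Y"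
    using U unfolding mat_subspace_def by auto
  then show "a \<cdot>\<^sub>m X + b \<cdot>\<^sub>m Y \<in> {Y \<in> U. Y * A = A * Y}"
    using U A unfolding mat_subspace_def
    by (simp add: add_mult_distrib_mat[of _ n n _ _ n] mult_add_distrib_mat[of _ n n _ n]
        mult_smult_assoc_mat[of _ n n _ n] mult_smult_distrib[of _ n n _ n])
qed

lemma linear_on_shift:
  assumes W: "mat_subspace n W" and R: "linear_on W R"
  shows "linear_on W (\<lambda>Y. R Y - mu \<cdot>\<^sub>m Y)"
proof -
  have W_carrier: "\<And>Y. Y \<in> W \<Longrightarrow> Y \<in> carrier_mat n n"
    and W_lincomb: "\<And>Y Z a b. Y \<in> W \<Longrightarrow> Z \<in> W \<Longrightarrow> a \<cdot>\<^sub>m Y + b \<cdot>\<^sub>m Z \<in> W"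
    using W unfolding mat_subspace_def by auto
  have R_maps: "\<And>Y. Y \<in> W \<Longrightarrow> R Y \<in> W"
    and R_lin: "\<And>Y Z a b. Y \<in> W \<Longrightarrow> Z \<in> W \<Longrightarrow> R (a \<cdot>\<^sub>m Y + b \<cdot>\<^sub>m Z) = a \<cdot>\<^sub>m R Y + b \<cdot>\<^sub>m R Z"
    using R unfolding linear_on_def by auto
  show ?thesis
    unfolding linear_on_def
  proof (intro conjI ballI allI)
    fix Y assume "Y \<in> W"
    then have "Y \<in> carrier_mat n n" "R Y \<in> carrier_mat n n" "1 \<cdot>\<^sub>m R Y + (- mu) \<cdot>\<^sub>m Y \<in> W"
      using W_carrier R_maps W_lincomb by auto
    moreover have "1 \<cdot>\<^sub>m R Y + (- mu) \<cdot>\<^sub>m Y = R Y - mu \<cdot>\<^sub>m Y"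
      using calculation by (intro eq_matI) auto
    ultimately show "R Y - mu \<cdot>\<^sub>m Y \<in> W" by simp
  next
    fix Y Z a b assume YZ: "Y \<in> W" "Z \<in> W"
    then have "Y \<in> carrier_mat n n" "Z \<in> carrier_mat n n" "R Y \<in> carrier_mat n n" "R Z \<in> carrier_mat n n"
      using W_carrier R_maps by auto
    then show "R (a \<cdot>\<^sub>m Y + b \<cdot>\<^sub>m Z) - mu \<cdot>\<^sub>m (a \<cdot>\<^sub>m Y + b \<cdot>\<^sub>m Z)
        = a \<cdot>\<^sub>m (R Y - mu \<cdot>\<^sub>m Y) + b \<cdot>\<^sub>m (R Z - mu \<cdot>\<^sub>m Z)"
      unfolding R_lin[OF YZ] by (intro eq_matI) (auto simp: algebra_simps)
  qed
qed

lemma inj_on_shift_if_not_op_eigenvalue: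
  assumes U: "mat_subspace n U" and R: "linear_on U R" and no_eigenvalue: "\<not> op_eigenvalue n U R mu"
  shows "inj_on (\<lambda>Y. R Y - mu \<cdot>\<^sub>m Y) U"
proof (rule inj_onI)
  fix Y Z assume YZ: "Y \<in> U" "Z \<in> U" and eq: "R Y - mu \<cdot>\<^sub>m Y = R Z - mu \<cdot>\<^sub>m Z"
  have U_carrier: "\<And>Y. Y \<in> U \<Longrightarrow> Y \<in> carrier_mat n n"
    using U unfolding mat_subspace_def by auto
  have shift: "linear_on U (\<lambda>Y. R Y - mu \<cdot>\<^sub>m Y)"
    using U R by (rule linear_on_shift)
  define D where "D = 1 \<cdot>\<^sub>m Y + (- 1) \<cdot>\<^sub>m Z"
  have "D \<in> U"
    unfolding D_def using U YZ unfolding mat_subspace_def by blast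
  then have carrier: "D \<in> carrier_mat n n" "R D \<in> carrier_mat n n" "R Z - mu \<cdot>\<^sub>m Z \<in> carrier_mat n n"
    using U_carrier R YZ(2) shift unfolding linear_on_def by auto
  have "R D - mu \<cdot>\<^sub>m D = 1 \<cdot>\<^sub>m (R Y - mu \<cdot>\<^sub>m Y) + (- 1) \<cdot>\<^sub>m (R Z - mu \<cdot>\<^sub>m Z)"
    unfolding D_def using shift YZ unfolding linear_on_def by blast
  also have "\<dots> = 0\<^sub>m n n"
    unfolding eq using carrier_matD[OF carrier(3)] by (intro eq_matI) auto
  finally have "R D = mu \<cdot>\<^sub>m D"
    using carrier by (simp add: mat_diff_eq_zero_iff)
  then have "D = 0\<^sub>m n n"
    using no_eigenvalue \<open>D \<in> U\<close> unfolding op_eigenvalue_def by blast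
  moreover have "Y \<in> carrier_mat n n" "Z \<in> carrier_mat n n"
    using YZ U_carrier by auto
  moreover have "Y - Z = D"
    unfolding D_def using calculation(2,3) by (intro eq_matI) auto
  ultimately show "Y = Z"
    by (simp add: mat_diff_eq_zero_iff)
qed

lemma op_eigenvalue_if_eigenvector_modulo_invariant_subspace:
  assumes U: "mat_subspace n U" and R: "linear_on U R"
    and W: "mat_subspace n W" "W \<subseteq> U" "R ` W \<subseteq> W"
    and X: "X \<in> U" "X \<notin> W" "R X - mu \<cdot>\<^sub>m X \<in> W"
  shows "op_eigenvalue n U R mu"
proof (rule ccontr)
  define T where "T Y = R Y - mu \<cdot>\<^sub>m Y" for Y
  assume "\<not> op_eigenvalue n U R mu"
  then have T_inj: "inj_on T U"
    unfolding T_def using U R by (intro inj_on_shift_if_not_op_eigenvalue)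
  have "linear_on W R"
    using R W(2,3) unfolding linear_on_def by blast
  then have "T ` W = W"
    unfolding T_def using W(1) inj_on_subset[OF T_inj W(2)] unfolding T_def
    by (intro inj_on_imp_surj_on_mat_subspace linear_on_shift)
  then obtain Y where "Y \<in> W" "T X = T Y"
    using X(3) unfolding T_def[symmetric] by (metis imageE)
  then have "X = Y"
    using inj_onD[OF T_inj] X(1) W(2) by blast
  then show False
    using \<open>Y \<in> W\<close> X(2) by blast
qed

section \<open>Polynomials evaluated at a matrix\<close>

lemma poly_mat_0 [simp]: "poly_mat n 0 A = 0\<^sub>m n n"
  unfolding poly_mat_def by simp

lemma poly_mat_pCons:
  "poly_mat n (pCons a p) A = a \<cdot>\<^sub>m 1\<^sub>m n + A * poly_mat n p A"
  if "A \<in> carrier_mat n n"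
proof (cases "p = 0 \<and> a = 0")
  case True
  then show ?thesis using that by (intro eq_matI) auto
next
  case False
  then have "coeffs (pCons a p) = a # coeffs p"
    by (auto simp: cCons_def)
  then show ?thesis unfolding poly_mat_def by simp
qed

lemma poly_mat_carrier [simp]: "A \<in> carrier_mat n n \<Longrightarrow> poly_mat n p A \<in> carrier_mat n n"
  by (induction p rule: pCons_induct) (auto simp: poly_mat_pCons)

lemma poly_mat_intertwine:
  assumes carrier: "A \<in> carrier_mat n n" "B \<in> carrier_mat n n" "C \<in> carrier_mat n n"
    and BC: "B * C = C * A"
  shows "poly_mat n p B * C = C * poly_mat n p A"
proof (induction p rule: pCons_induct)
  case (pCons a p)
  have PA: "poly_mat n p A \<in> carrier_mat n n" and PB: "poly_mat n p B \<in> carrier_mat n n"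
    using carrier by simp_all
  have "poly_mat n (pCons a p) B * C = a \<cdot>\<^sub>m C + B * (poly_mat n p B * C)"
    using carrier PB by (simp add: poly_mat_pCons add_mult_distrib_mat[of _ n n _ _ n] assoc_mult_mat[of _ n n _ n _ n]
        mult_smult_assoc_mat[of _ n n _ n])
  also have "\<dots> = a \<cdot>\<^sub>m C + (B * C) * poly_mat n p A"
    using carrier PA by (simp add: pCons.IH assoc_mult_mat[of _ n n _ n _ n])
  also have "\<dots> = C * poly_mat n (pCons a p) A"
    using carrier PA by (simp add: BC poly_mat_pCons mult_add_distrib_mat[of _ n n _ n] assoc_mult_mat[of _ n n _ n _ n]
        mult_smult_distrib[of _ n n _ n])
  finally show ?case .
qed (use carrier in simp)

lemma transpose_poly_mat:
  assumes A: "A \<in> carrier_mat n n"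
  shows "transpose_mat (poly_mat n p A) = poly_mat n p (transpose_mat A)"
proof (induction p rule: pCons_induct)
  case (pCons a p)
  have At: "transpose_mat A \<in> carrier_mat n n"
    using A by simp
  have "transpose_mat (a \<cdot>\<^sub>m 1\<^sub>m n :: 'a :: comm_ring_1 mat) = a \<cdot>\<^sub>m 1\<^sub>m n"
    by (intro eq_matI) auto
  moreover have "transpose_mat (A * poly_mat n p A) = transpose_mat A * poly_mat n p (transpose_mat A)"
    using A At poly_mat_intertwine[OF At At At refl, of p]
    by (simp add: transpose_mult[of _ n n _ n] pCons.IH)
  ultimately show ?case
    using A by (simp add: poly_mat_pCons transpose_add[of _ n n])
qed simp

lemma poly_mat_mult_jordan_chain:
  fixes A :: "'a :: field mat"
  assumes A: "A \<in> carrier_mat n n" and v: "v \<in> carrier_vec n" and w: "w \<in> carrier_vec n"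
    and Av: "A *\<^sub>v v = l \<cdot>\<^sub>v v + w" and Aw: "A *\<^sub>v w = l \<cdot>\<^sub>v w"
  shows "poly_mat n p A *\<^sub>v v = poly p l \<cdot>\<^sub>v v + poly (pderiv p) l \<cdot>\<^sub>v w"
proof (induction p rule: pCons_induct)
  case 0
  show ?case using v w by (intro eq_vecI) auto
next
  case (pCons a p)
  have P: "poly_mat n p A \<in> carrier_mat n n"
    using A by simp
  have "poly_mat n (pCons a p) A *\<^sub>v v = a \<cdot>\<^sub>v v + A *\<^sub>v (poly_mat n p A *\<^sub>v v)"
    using A P v by (simp add: poly_mat_pCons add_mult_distrib_mat_vec[of _ n n] smult_mat_mult_vec[of _ n n]
        assoc_mult_mat_vec[of _ n n _ n])
  also have "\<dots> = a \<cdot>\<^sub>v v + (poly p l \<cdot>\<^sub>v (l \<cdot>\<^sub>v v + w) + poly (pderiv p) l \<cdot>\<^sub>v (l \<cdot>\<^sub>v w))"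
    using A v w by (simp add: pCons.IH mult_add_distrib_mat_vec[of _ n n] mult_mat_vec[of _ n n] Av Aw)
  also have "\<dots> = poly (pCons a p) l \<cdot>\<^sub>v v + poly (pderiv (pCons a p)) l \<cdot>\<^sub>v w"
    using v w by (intro eq_vecI) (auto simp: pderiv_pCons algebra_simps)
  finally show ?case .
qed

lemma poly_mat_mult_eigenvector:
  fixes A :: "'a :: field mat"
  assumes A: "A \<in> carrier_mat n n" and v: "v \<in> carrier_vec n" and Av: "A *\<^sub>v v = l \<cdot>\<^sub>v v"
  shows "poly_mat n p A *\<^sub>v v = poly p l \<cdot>\<^sub>v v"
proof -
  have "A *\<^sub>v v = l \<cdot>\<^sub>v v + 0\<^sub>v n" "A *\<^sub>v 0\<^sub>v n = l \<cdot>\<^sub>v 0\<^sub>v n"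
    using A v Av by (auto intro!: eq_vecI)
  from poly_mat_mult_jordan_chain[OF A v _ this, of p]
  show ?thesis using v by (auto intro!: eq_vecI)
qed

lemma op_eigenvalue_if_commutator_eigenvector:
  assumes U: "mat_subspace n U" and A: "A \<in> carrier_mat n n" and R: "linear_on U R"
    and R_comm: "\<And>Y. Y \<in> U \<Longrightarrow> commutator (R Y) A = commutator Y (poly_mat n p A)"
    and X: "X \<in> U" "commutator X (poly_mat n p A) = mu \<cdot>\<^sub>m commutator X A"
      "commutator X A \<noteq> 0\<^sub>m n n"
  shows "op_eigenvalue n U R mu"
proof -
  let ?W = "{Y \<in> U. Y * A = A * Y}"
  have U_carrier: "\<And>Y. Y \<in> U \<Longrightarrow> Y \<in> carrier_mat n n"
    using U unfolding mat_subspace_def by auto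
  have R_maps: "\<And>Y. Y \<in> U \<Longrightarrow> R Y \<in> U"
    using R unfolding linear_on_def by auto
  have "R ` ?W \<subseteq> ?W"
  proof safe
    fix Y assume "Y \<in> U" "Y * A = A * Y"
    then have "poly_mat n p A * Y = Y * poly_mat n p A"
      using A U_carrier by (intro poly_mat_intertwine) auto
    then have "commutator (R Y) A = 0\<^sub>m n n"
      using R_comm[OF \<open>Y \<in> U\<close>] \<open>Y \<in> U\<close> A U_carrier by (simp add: commutator_eq_zero_iff)
    then show "R Y \<in> U" "R Y * A = A * R Y"
      using \<open>Y \<in> U\<close> A U_carrier R_maps by (auto simp: commutator_eq_zero_iff)
  qed
  moreover have "X \<notin> ?W"
    using X(3) A U_carrier[OF X(1)] by (auto simp: commutator_eq_zero_iff)
  moreover have "R X - mu \<cdot>\<^sub>m X \<in> ?W"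
  proof -
    have carrier: "X \<in> carrier_mat n n" "R X \<in> carrier_mat n n"
      using X(1) U_carrier R_maps by auto
    have "1 \<cdot>\<^sub>m R X + (- mu) \<cdot>\<^sub>m X \<in> U"
      using U X(1) R_maps unfolding mat_subspace_def by blast
    moreover have "1 \<cdot>\<^sub>m R X + (- mu) \<cdot>\<^sub>m X = R X - mu \<cdot>\<^sub>m X"
      using carrier by (intro eq_matI) auto
    moreover have "commutator (R X - mu \<cdot>\<^sub>m X) A = commutator (R X) A - mu \<cdot>\<^sub>m commutator X A"
      unfolding commutator_def using carrier A
      by (simp add: minus_mult_distrib_mat[of _ n n _ _ n] mult_minus_distrib_mat[of _ n n _ n]
          mult_smult_assoc_mat[of _ n n _ n] mult_smult_distrib[of _ n n _ n])
        (intro eq_matI, auto simp: algebra_simps)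
    then have "commutator (R X - mu \<cdot>\<^sub>m X) A = 0\<^sub>m n n"
      using R_comm[OF X(1)] X(2) carrier A by simp
    ultimately show ?thesis
      using carrier A by (simp add: commutator_eq_zero_iff minus_carrier_mat)
  qed
  ultimately show ?thesis
    using op_eigenvalue_if_eigenvector_modulo_invariant_subspace[OF U R
        mat_subspace_centralizer[OF U A] _ _ X(1)] by blast
qed

section \<open>Real Jordan chains\<close>

lemma sum_list_strict_mono_ex1:
  fixes f g :: "'a \<Rightarrow> 'b :: ordered_cancel_comm_monoid_add"
  assumes "\<And>x. x \<in> set xs \<Longrightarrow> f x \<le> g x" and "y \<in> set xs" "f y < g y"
  shows "sum_list (map f xs) < sum_list (map g xs)"
  using assms
proof (induction xs)
  case (Cons a xs)
  show ?case
  proof (cases "y = a")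
    case True
    then show ?thesis
      using Cons.prems sum_list_mono[of xs f g] by (simp add: add_less_le_mono)
  next
    case False
    then show ?thesis
      using Cons by (simp add: add_le_less_mono)
  qed
qed simp

lemma kernel_gap_if_nontrivial_jordan_block:
  fixes A :: "'a :: field mat"
  assumes A: "A \<in> carrier_mat n n" and jnf: "jordan_nf A n_as"
    and block: "(k, ev) \<in> set n_as" "k \<ge> 2"
  obtains x where "x \<in> carrier_vec n" "char_matrix A ev *\<^sub>v (char_matrix A ev *\<^sub>v x) = 0\<^sub>v n"
    "char_matrix A ev *\<^sub>v x \<noteq> 0\<^sub>v n"
proof -
  \<comment> \<open>\<open>dim ker (A - ev)\<^sup>k\<close> is the sum of \<open>min k s\<close> over the sizes \<open>s\<close> of the Jordan blocks of \<open>ev\<close>.\<close>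
  define N where "N = char_matrix A ev"
  have N: "N \<in> carrier_mat n n"
    unfolding N_def using A by simp
  have "dim_gen_eigenspace A ev 1 < dim_gen_eigenspace A ev 2"
    unfolding dim_gen_eigenspace[OF jnf] using block
    by (intro sum_list_strict_mono_ex1[where y = k]) force+
  then have dim_less: "kernel_dim N < kernel_dim (N * N)"
    unfolding dim_gen_eigenspace_def N_def[symmetric] using N by (simp add: numeral_2_eq_2)
  have "\<not> mat_kernel (N * N) \<subseteq> mat_kernel N"
  proof
    assume "mat_kernel (N * N) \<subseteq> mat_kernel N"
    then have "mat_kernel (N * N) = mat_kernel N"
      using mat_kernel_mult_subset[OF N N] by blast
    then have "kernel_dim (N * N) = kernel_dim N"
      unfolding kernel_dim_def using N by simp
    then show False
      using dim_less by simp
  qed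
  then obtain x where x: "x \<in> mat_kernel (N * N)" "x \<notin> mat_kernel N"
    by blast
  then show ?thesis
    using that N unfolding N_def[symmetric] by (auto simp: mat_kernel_def)
qed

lemma map_vec_Re_Im_of_real_mat_mult_vec:
  assumes "B \<in> carrier_mat nr nc" "x \<in> carrier_vec nc"
  shows "map_vec Re (map_mat complex_of_real B *\<^sub>v x) = B *\<^sub>v map_vec Re x"
    and "map_vec Im (map_mat complex_of_real B *\<^sub>v x) = B *\<^sub>v map_vec Im x"
  using assms by (auto intro!: eq_vecI simp: scalar_prod_def)

lemma complex_vec_eq_zeroI:
  assumes "z \<in> carrier_vec n" "map_vec Re z = 0\<^sub>v n" "map_vec Im z = 0\<^sub>v n"
  shows "z = 0\<^sub>v n"
proof (rule eq_vecI)
  fix i assume "i < dim_vec (0\<^sub>v n :: complex vec)"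
  then show "z $ i = 0\<^sub>v n $ i"
    using assms(1) arg_cong[OF assms(2), of "\<lambda>v. v $ i"] arg_cong[OF assms(3), of "\<lambda>v. v $ i"]
    by (simp add: complex_eq_iff)
qed (use assms in simp)

lemma real_kernel_gap_if_complex_kernel_gap:
  assumes N: "N \<in> carrier_mat n n" and x: "x \<in> carrier_vec n"
    and kernel: "map_mat complex_of_real N *\<^sub>v (map_mat complex_of_real N *\<^sub>v x) = 0\<^sub>v n"
    and image: "map_mat complex_of_real N *\<^sub>v x \<noteq> 0\<^sub>v n"
  obtains y where "y \<in> carrier_vec n" "N *\<^sub>v (N *\<^sub>v y) = 0\<^sub>v n" "N *\<^sub>v y \<noteq> 0\<^sub>v n"
proof -
  let ?C = "map_mat complex_of_real"
  have "N *\<^sub>v (N *\<^sub>v map_vec f x) = map_vec f (?C N *\<^sub>v (?C N *\<^sub>v x))"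
    and "N *\<^sub>v map_vec f x = map_vec f (?C N *\<^sub>v x)" if "f = Re \<or> f = Im" for f
    using that N x by (auto simp: map_vec_Re_Im_of_real_mat_mult_vec[of N n n])
  then have kernel_parts: "N *\<^sub>v (N *\<^sub>v map_vec f x) = 0\<^sub>v n"
    and image_parts: "N *\<^sub>v map_vec f x = map_vec f (?C N *\<^sub>v x)" if "f = Re \<or> f = Im" for f
    unfolding kernel using that by (auto intro!: eq_vecI)
  have "N *\<^sub>v map_vec Re x \<noteq> 0\<^sub>v n \<or> N *\<^sub>v map_vec Im x \<noteq> 0\<^sub>v n"
    using complex_vec_eq_zeroI[of "?C N *\<^sub>v x" n] image_parts N x image by auto
  then show ?thesis
    using that kernel_parts x by (metis map_carrier_vec)
qed

lemma jordan_chain_if_nontrivial_jordan_block: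
  fixes A :: "real mat"
  assumes A: "A \<in> carrier_mat n n" and block: "has_nontrivial_jordan_block A l"
  obtains v w where "v \<in> carrier_vec n" "w \<in> carrier_vec n" "w \<noteq> 0\<^sub>v n"
    "A *\<^sub>v v = l \<cdot>\<^sub>v v + w" "A *\<^sub>v w = l \<cdot>\<^sub>v w"
proof -
  let ?C = "map_mat complex_of_real"
  obtain n_as k where jnf: "jordan_nf (?C A) n_as" and k: "(k, complex_of_real l) \<in> set n_as" "k \<ge> 2"
    using block unfolding has_nontrivial_jordan_block_def by blast
  define N where "N = char_matrix A l"
  have N: "N \<in> carrier_mat n n"
    unfolding N_def using A by simp
  have char_C: "char_matrix (?C A) (complex_of_real l) = ?C N"
    unfolding N_def char_matrix_def using A by (intro eq_matI) auto
  have "?C A \<in> carrier_mat n n"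
    using A by simp
  obtain x where x: "x \<in> carrier_vec n" "?C N *\<^sub>v (?C N *\<^sub>v x) = 0\<^sub>v n" "?C N *\<^sub>v x \<noteq> 0\<^sub>v n"
    by (rule kernel_gap_if_nontrivial_jordan_block[OF \<open>?C A \<in> carrier_mat n n\<close> jnf k, unfolded char_C])
  obtain y where y: "y \<in> carrier_vec n" "N *\<^sub>v (N *\<^sub>v y) = 0\<^sub>v n" "N *\<^sub>v y \<noteq> 0\<^sub>v n"
    by (rule real_kernel_gap_if_complex_kernel_gap[OF N x])
  have A_N: "A *\<^sub>v u = l \<cdot>\<^sub>v u + N *\<^sub>v u" if "u \<in> carrier_vec n" for u
  proof -
    have "N *\<^sub>v u = A *\<^sub>v u + (- l) \<cdot>\<^sub>v u"
      unfolding N_def char_matrix_def using A that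
      by (simp add: add_mult_distrib_mat_vec[of _ n n] smult_mat_mult_vec[of _ n n])
    then show ?thesis
      using A that by (intro eq_vecI) auto
  qed
  show ?thesis
  proof
    show "A *\<^sub>v y = l \<cdot>\<^sub>v y + N *\<^sub>v y"
      using y(1) by (rule A_N)
    show "A *\<^sub>v (N *\<^sub>v y) = l \<cdot>\<^sub>v (N *\<^sub>v y)"
      using A_N[of "N *\<^sub>v y"] y N by simp
  qed (use y N in auto)
qed

section \<open>Pseudo-hermitian spaces\<close>

definition outer_prod :: "'a :: comm_ring_1 vec \<Rightarrow> 'a vec \<Rightarrow> 'a mat" where
  "outer_prod y x = mat (dim_vec y) (dim_vec x) (\<lambda>(i, j). y $ i * x $ j)"

lemma outer_prod_carrier [simp]:
  "y \<in> carrier_vec nr \<Longrightarrow> x \<in> carrier_vec nc \<Longrightarrow> outer_prod y x \<in> carrier_mat nr nc"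
  unfolding outer_prod_def by auto

lemma index_outer_prod [simp]:
  "i < dim_vec y \<Longrightarrow> j < dim_vec x \<Longrightarrow> outer_prod y x $$ (i, j) = y $ i * x $ j"
  "dim_row (outer_prod y x) = dim_vec y" "dim_col (outer_prod y x) = dim_vec x"
  unfolding outer_prod_def by auto

lemma mult_outer_prod:
  assumes "A \<in> carrier_mat nr n" "y \<in> carrier_vec n"
  shows "A * outer_prod y x = outer_prod (A *\<^sub>v y) x"
  using assms by (intro eq_matI)
    (auto simp: scalar_prod_def sum_distrib_right mult.assoc lessThan_atLeast0)

lemma outer_prod_mult:
  assumes "A \<in> carrier_mat n nc" "x \<in> carrier_vec n"
  shows "outer_prod y x * A = outer_prod y (transpose_mat A *\<^sub>v x)"
  using assms by (intro eq_matI)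
    (auto simp: scalar_prod_def sum_distrib_left mult_ac lessThan_atLeast0)

lemma transpose_outer_prod: "transpose_mat (outer_prod y x) = outer_prod x y"
  by (intro eq_matI) auto

lemma outer_prod_mult_vec:
  assumes "x \<in> carrier_vec n" "u \<in> carrier_vec n"
  shows "outer_prod y x *\<^sub>v u = (x \<bullet> u) \<cdot>\<^sub>v y"
  using assms by (intro eq_vecI) (auto simp: scalar_prod_def sum_distrib_left mult_ac)

locale pseudo_hermitian_space =
  fixes n :: nat and G J :: "real mat"
  assumes pseudo_hermitian: "pseudo_hermitian n G J"
begin

lemma carrier_G_J [simp]: "G \<in> carrier_mat n n" "J \<in> carrier_mat n n"
  and G_symmetric: "transpose_mat G = G" and det_G: "det G \<noteq> 0"
  and J_squared: "J * J = - 1\<^sub>m n" and J_isometry: "transpose_mat J * G * J = G"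
  using pseudo_hermitian unfolding pseudo_hermitian_def by auto

lemma dim_G_J [simp]: "dim_row G = n" "dim_col G = n" "dim_row J = n" "dim_col J = n"
  using carrier_matD carrier_G_J by metis+

lemma transpose_J_G: "transpose_mat J * G = - (G * J)"
proof -
  have JtG: "transpose_mat J * G \<in> carrier_mat n n"
    by simp
  have "G * J = (transpose_mat J * G * J) * J"
    using J_isometry by simp
  also have "\<dots> = (transpose_mat J * G) * (J * J)"
    using JtG by (simp add: assoc_mult_mat[of _ n n _ n _ n])
  also have "\<dots> = - (transpose_mat J * G)"
    unfolding J_squared by (simp add: right_mult_one_mat[OF JtG])
  finally show ?thesis by simp
qed

lemma J_J_mult_vec: "v \<in> carrier_vec n \<Longrightarrow> J *\<^sub>v (J *\<^sub>v v) = - v"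
  using J_squared by (simp flip: assoc_mult_mat_vec[of J n n J n v])

text \<open>\<open>herm_dyad a b\<close> is the \<open>J\<close>-linear map \<open>u \<mapsto> g(a,u) b + g(J a,u) J b\<close>, i.e. the complex
  rank-one map \<open>u \<mapsto> h(a,u) b\<close> for the hermitian form \<open>h\<close> of \<open>(g, J)\<close>; its \<open>g\<close>-adjoint is
  \<open>herm_dyad b a\<close>.\<close>

definition herm_dyad :: "real vec \<Rightarrow> real vec \<Rightarrow> real mat" where
  "herm_dyad a b = outer_prod b (G *\<^sub>v a) + outer_prod (J *\<^sub>v b) (G *\<^sub>v (J *\<^sub>v a))"

lemma dim_herm_dyad [simp]: "dim_row (herm_dyad a b) = n" "dim_col (herm_dyad a b) = n"
  unfolding herm_dyad_def by simp_all

lemma herm_dyad_carrier [simp]: "herm_dyad a b \<in> carrier_mat n n"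
  by (simp add: carrier_matI)

lemma mult_herm_dyad:
  assumes P: "P \<in> carrier_mat n n" "P * J = J * P" and ab: "a \<in> carrier_vec n" "b \<in> carrier_vec n"
  shows "P * herm_dyad a b = herm_dyad a (P *\<^sub>v b)"
proof -
  have "P *\<^sub>v (J *\<^sub>v b) = J *\<^sub>v (P *\<^sub>v b)"
    using P ab by (intro mult_mat_vec_eq_if_mult_eq) auto
  then show ?thesis
    unfolding herm_dyad_def using P ab
    by (simp add: mult_add_distrib_mat[of P n n _ n] mult_outer_prod[of P n n])
qed

lemma herm_dyad_mult:
  assumes P: "P \<in> carrier_mat n n" "P * J = J * P" "transpose_mat P * G = G * P"
    and ab: "a \<in> carrier_vec n" "b \<in> carrier_vec n"
  shows "herm_dyad a b * P = herm_dyad (P *\<^sub>v a) b"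
proof -
  have adjoint: "transpose_mat P *\<^sub>v (G *\<^sub>v v) = G *\<^sub>v (P *\<^sub>v v)" if "v \<in> carrier_vec n" for v
    using P that by (intro mult_mat_vec_eq_if_mult_eq) auto
  have "P *\<^sub>v (J *\<^sub>v a) = J *\<^sub>v (P *\<^sub>v a)"
    using P ab by (intro mult_mat_vec_eq_if_mult_eq) auto
  then show ?thesis
    unfolding herm_dyad_def using P ab adjoint[of a] adjoint[of "J *\<^sub>v a"]
    by (simp add: add_mult_distrib_mat[of _ n n _ _ n] outer_prod_mult[of P n n])
qed

lemma herm_dyad_mult_J:
  assumes ab: "a \<in> carrier_vec n" "b \<in> carrier_vec n"
  shows "herm_dyad a b * J = J * herm_dyad a b"
proof -
  have "transpose_mat J *\<^sub>v (G *\<^sub>v a) = (transpose_mat J * G) *\<^sub>v a"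
    using ab by (simp add: assoc_mult_mat_vec[of _ n n _ n])
  also have "\<dots> = - ((G * J) *\<^sub>v a)"
    unfolding transpose_J_G using ab by simp
  also have "\<dots> = - (G *\<^sub>v (J *\<^sub>v a))"
    using ab by (simp add: assoc_mult_mat_vec[of _ n n _ n])
  finally have "transpose_mat J *\<^sub>v (G *\<^sub>v a) = - (G *\<^sub>v (J *\<^sub>v a))" .
  moreover have "transpose_mat J *\<^sub>v (G *\<^sub>v (J *\<^sub>v a)) = G *\<^sub>v a"
    using ab J_isometry by (simp flip: assoc_mult_mat_vec[of _ n n _ n] add: assoc_mult_mat[of _ n n _ n _ n])
  ultimately have "herm_dyad a b * J = outer_prod b (- (G *\<^sub>v (J *\<^sub>v a))) + outer_prod (J *\<^sub>v b) (G *\<^sub>v a)"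
    unfolding herm_dyad_def using ab by (simp add: add_mult_distrib_mat[of _ n n _ _ n] outer_prod_mult[of J n n])
  also have "\<dots> = J * herm_dyad a b"
    unfolding herm_dyad_def using ab
    by (simp add: mult_add_distrib_mat[of J n n _ n] mult_outer_prod[of J n n] J_J_mult_vec)
      (intro eq_matI, auto)
  finally show ?thesis .
qed

lemma transpose_herm_dyad:
  assumes ab: "a \<in> carrier_vec n" "b \<in> carrier_vec n"
  shows "transpose_mat (herm_dyad a b) * G = G * herm_dyad b a"
  unfolding herm_dyad_def using ab
  by (simp add: transpose_add[of _ n n] transpose_outer_prod add_mult_distrib_mat[of _ n n _ _ n]
      outer_prod_mult[of G n n] G_symmetric mult_add_distrib_mat[of G n n _ n] mult_outer_prod[of G n n])

lemma herm_dyad_add_left: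
  "a \<in> carrier_vec n \<Longrightarrow> a' \<in> carrier_vec n \<Longrightarrow> b \<in> carrier_vec n \<Longrightarrow>
    herm_dyad (a + a') b = herm_dyad a b + herm_dyad a' b"
  unfolding herm_dyad_def
  by (intro eq_matI) (auto simp: mult_add_distrib_mat_vec[of _ n n] algebra_simps)

lemma herm_dyad_add_right:
  "a \<in> carrier_vec n \<Longrightarrow> b \<in> carrier_vec n \<Longrightarrow> b' \<in> carrier_vec n \<Longrightarrow>
    herm_dyad a (b + b') = herm_dyad a b + herm_dyad a b'"
  unfolding herm_dyad_def
  by (intro eq_matI) (auto simp: mult_add_distrib_mat_vec[of _ n n] algebra_simps)

lemma herm_dyad_smult_left:
  "a \<in> carrier_vec n \<Longrightarrow> b \<in> carrier_vec n \<Longrightarrow> herm_dyad (c \<cdot>\<^sub>v a) b = c \<cdot>\<^sub>m herm_dyad a b"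
  unfolding herm_dyad_def
  by (intro eq_matI) (auto simp: mult_mat_vec[of _ n n] algebra_simps)

lemma herm_dyad_smult_right:
  "a \<in> carrier_vec n \<Longrightarrow> b \<in> carrier_vec n \<Longrightarrow> herm_dyad a (c \<cdot>\<^sub>v b) = c \<cdot>\<^sub>m herm_dyad a b"
  unfolding herm_dyad_def
  by (intro eq_matI) (auto simp: mult_mat_vec[of _ n n] algebra_simps)

lemma herm_dyad_mult_vec:
  assumes "a \<in> carrier_vec n" "b \<in> carrier_vec n" "u \<in> carrier_vec n"
  shows "herm_dyad a b *\<^sub>v u = ((G *\<^sub>v a) \<bullet> u) \<cdot>\<^sub>v b + ((G *\<^sub>v (J *\<^sub>v a)) \<bullet> u) \<cdot>\<^sub>v (J *\<^sub>v b)"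
  unfolding herm_dyad_def using assms
  by (simp add: add_mult_distrib_mat_vec[of _ n n] outer_prod_mult_vec[of _ n])

lemma herm_dyad_nonzero:
  assumes a: "a \<in> carrier_vec n" "a \<noteq> 0\<^sub>v n" and b: "b \<in> carrier_vec n" "b \<noteq> 0\<^sub>v n"
  shows "herm_dyad a b \<noteq> 0\<^sub>m n n"
proof
  assume zero: "herm_dyad a b = 0\<^sub>m n n"
  define u where "u = G *\<^sub>v a"
  define c where "c = u \<bullet> u"
  define d where "d = (G *\<^sub>v (J *\<^sub>v a)) \<bullet> u"
  have "u \<in> carrier_vec n" "u \<noteq> 0\<^sub>v n"
    unfolding u_def using a det_G det_0_iff_vec_prod_zero[OF carrier_G_J(1)] by auto
  then have "c > 0"
    unfolding c_def by (rule scalar_prod_self_pos)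
  have "0\<^sub>m n n *\<^sub>v u = 0\<^sub>v n"
    using \<open>u \<in> carrier_vec n\<close> by (intro eq_vecI) (auto simp: scalar_prod_def)
  then have "c \<cdot>\<^sub>v b + d \<cdot>\<^sub>v (J *\<^sub>v b) = 0\<^sub>v n"
    using herm_dyad_mult_vec[OF a(1) b(1) \<open>u \<in> carrier_vec n\<close>] zero
    unfolding c_def d_def u_def by simp
  then have "J *\<^sub>v (c \<cdot>\<^sub>v b + d \<cdot>\<^sub>v (J *\<^sub>v b)) = 0\<^sub>v n"
    by auto
  then have "c \<cdot>\<^sub>v (J *\<^sub>v b) + d \<cdot>\<^sub>v (- b) = 0\<^sub>v n"
    using b by (simp add: mult_add_distrib_mat_vec[of _ n n] mult_mat_vec[of _ n n] J_J_mult_vec)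
  have "b = 0\<^sub>v n"
  proof (rule eq_vecI)
    fix i assume "i < dim_vec (0\<^sub>v n :: real vec)"
    then have "c * b $ i + d * (J *\<^sub>v b) $ i = 0" "c * (J *\<^sub>v b) $ i - d * b $ i = 0"
      using arg_cong[OF \<open>c \<cdot>\<^sub>v b + d \<cdot>\<^sub>v (J *\<^sub>v b) = 0\<^sub>v n\<close>, of "\<lambda>x. x $ i"]
        arg_cong[OF \<open>c \<cdot>\<^sub>v (J *\<^sub>v b) + d \<cdot>\<^sub>v (- b) = 0\<^sub>v n\<close>, of "\<lambda>x. x $ i"] b(1) by auto
    moreover have "(c * c + d * d) * b $ i
        = c * (c * b $ i + d * (J *\<^sub>v b) $ i) - d * (c * (J *\<^sub>v b) $ i - d * b $ i)"
      by (simp add: algebra_simps)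
    ultimately have "(c * c + d * d) * b $ i = 0"
      by simp
    moreover have "c * c + d * d > 0"
      using \<open>c > 0\<close> by (simp add: add_pos_nonneg)
    ultimately have "b $ i = 0"
      by (metis mult_eq_0_iff less_irrefl)
    then show "b $ i = 0\<^sub>v n $ i"
      using \<open>i < dim_vec (0\<^sub>v n)\<close> by simp
  qed (use b in simp)
  then show False
    using b(2) by contradiction
qed

lemma sym_herm_dyad_nonzero:
  assumes H: "hermitian_endo n G J H"
    and a: "a \<in> carrier_vec n" "a \<noteq> 0\<^sub>v n" and b: "b \<in> carrier_vec n" "b \<noteq> 0\<^sub>v n"
    and Ha: "H *\<^sub>v a = \<alpha> \<cdot>\<^sub>v a" and Hb: "H *\<^sub>v b = \<beta> \<cdot>\<^sub>v b" and "\<alpha> \<noteq> \<beta>"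
  shows "herm_dyad a b + herm_dyad b a \<noteq> 0\<^sub>m n n"
proof
  assume sym_zero: "herm_dyad a b + herm_dyad b a = 0\<^sub>m n n"
  have "H \<in> carrier_mat n n" "H * J = J * H"
    using H unfolding hermitian_endo_def by auto
  then have "H * (herm_dyad a b + herm_dyad b a) = \<beta> \<cdot>\<^sub>m herm_dyad a b + \<alpha> \<cdot>\<^sub>m herm_dyad b a"
    using a b by (simp add: mult_add_distrib_mat[of _ n n _ n] mult_herm_dyad Ha Hb herm_dyad_smult_right)
  then have "\<beta> \<cdot>\<^sub>m herm_dyad a b + \<alpha> \<cdot>\<^sub>m herm_dyad b a = 0\<^sub>m n n"
    unfolding sym_zero using \<open>H \<in> carrier_mat n n\<close> by simp
  have "herm_dyad a b $$ (i, j) = 0" if "i < n" "j < n" for i j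
  proof -
    have "herm_dyad a b $$ (i, j) + herm_dyad b a $$ (i, j) = 0"
      "\<beta> * herm_dyad a b $$ (i, j) + \<alpha> * herm_dyad b a $$ (i, j) = 0"
      using arg_cong[OF sym_zero, of "\<lambda>M. M $$ (i, j)"] that
        arg_cong[OF \<open>\<beta> \<cdot>\<^sub>m herm_dyad a b + \<alpha> \<cdot>\<^sub>m herm_dyad b a = 0\<^sub>m n n\<close>, of "\<lambda>M. M $$ (i, j)"]
      by simp_all
    moreover have "(\<beta> - \<alpha>) * herm_dyad a b $$ (i, j)
        = (\<beta> * herm_dyad a b $$ (i, j) + \<alpha> * herm_dyad b a $$ (i, j))
          - \<alpha> * (herm_dyad a b $$ (i, j) + herm_dyad b a $$ (i, j))"
      by (simp add: algebra_simps)
    ultimately show ?thesis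
      using \<open>\<alpha> \<noteq> \<beta>\<close> by simp
  qed
  then have "herm_dyad a b = 0\<^sub>m n n"
    by (intro eq_matI) auto
  then show False
    using herm_dyad_nonzero[OF a b] by contradiction
qed

lemma skew_herm_dyad_in_u_alg:
  assumes ab: "a \<in> carrier_vec n" "b \<in> carrier_vec n"
  shows "herm_dyad a b - herm_dyad b a \<in> u_alg n G J"
proof -
  have carrier: "herm_dyad a b \<in> carrier_mat n n" "herm_dyad b a \<in> carrier_mat n n"
    using ab by simp_all
  have "(herm_dyad a b - herm_dyad b a) * J = J * (herm_dyad a b - herm_dyad b a)"
    using carrier herm_dyad_mult_J[OF ab] herm_dyad_mult_J[OF ab(2,1)]
    by (simp add: minus_mult_distrib_mat[of _ n n _ _ n] mult_minus_distrib_mat[of _ n n _ n])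
  moreover have "transpose_mat (herm_dyad a b - herm_dyad b a) * G = - (G * (herm_dyad a b - herm_dyad b a))"
    using carrier transpose_herm_dyad[OF ab] transpose_herm_dyad[OF ab(2,1)]
    by (simp add: transpose_minus[of _ n n] minus_mult_distrib_mat[of _ n n _ _ n] mult_minus_distrib_mat[of _ n n _ n])
      (intro eq_matI, auto)
  ultimately show ?thesis
    using carrier unfolding u_alg_def by (auto intro: minus_carrier_mat)
qed

lemma commutator_skew_herm_dyad:
  assumes H: "hermitian_endo n G J H" and ab: "a \<in> carrier_vec n" "b \<in> carrier_vec n"
  shows "commutator (herm_dyad a b - herm_dyad b a) H
    = herm_dyad (H *\<^sub>v a) b + herm_dyad b (H *\<^sub>v a) - (herm_dyad (H *\<^sub>v b) a + herm_dyad a (H *\<^sub>v b))"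
proof -
  have H': "H \<in> carrier_mat n n" "H * J = J * H" "transpose_mat H * G = G * H"
    using H unfolding hermitian_endo_def by auto
  then have "(herm_dyad a b - herm_dyad b a) * H = herm_dyad (H *\<^sub>v a) b - herm_dyad (H *\<^sub>v b) a"
    using ab by (simp add: minus_mult_distrib_mat[of _ n n _ _ n] herm_dyad_mult)
  moreover have "H * (herm_dyad a b - herm_dyad b a) = herm_dyad a (H *\<^sub>v b) - herm_dyad b (H *\<^sub>v a)"
    using ab H' by (simp add: mult_minus_distrib_mat[of _ n n _ n] mult_herm_dyad)
  ultimately show ?thesis
    unfolding commutator_def using ab H' by (intro eq_matI) auto
qed

lemma commutator_skew_herm_dyad_eigenvectors:
  assumes H: "hermitian_endo n G J H" and ab: "a \<in> carrier_vec n" "b \<in> carrier_vec n"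
    and Ha: "H *\<^sub>v a = \<alpha> \<cdot>\<^sub>v a" and Hb: "H *\<^sub>v b = \<beta> \<cdot>\<^sub>v b"
  shows "commutator (herm_dyad a b - herm_dyad b a) H = (\<alpha> - \<beta>) \<cdot>\<^sub>m (herm_dyad a b + herm_dyad b a)"
  unfolding commutator_skew_herm_dyad[OF H ab] Ha Hb using ab
  by (simp add: herm_dyad_smult_left herm_dyad_smult_right) (intro eq_matI, auto simp: algebra_simps)

lemma commutator_skew_herm_dyad_jordan_chain:
  assumes H: "hermitian_endo n G J H" and vw: "v \<in> carrier_vec n" "w \<in> carrier_vec n"
    and Hw: "H *\<^sub>v w = \<alpha> \<cdot>\<^sub>v w" and Hv: "H *\<^sub>v v = \<alpha> \<cdot>\<^sub>v v + \<beta> \<cdot>\<^sub>v w"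
  shows "commutator (herm_dyad w v - herm_dyad v w) H = (- 2 * \<beta>) \<cdot>\<^sub>m herm_dyad w w"
  unfolding commutator_skew_herm_dyad[OF H vw(2,1)] Hw Hv using vw
  by (simp add: herm_dyad_smult_left herm_dyad_smult_right herm_dyad_add_left herm_dyad_add_right)
    (intro eq_matI, auto simp: algebra_simps)

lemma hermitian_endo_poly_mat:
  assumes "hermitian_endo n G J A"
  shows "hermitian_endo n G J (poly_mat n p A)"
proof -
  have A: "A \<in> carrier_mat n n" "transpose_mat A * G = G * A" "A * J = J * A"
    using assms unfolding hermitian_endo_def by auto
  have "transpose_mat (poly_mat n p A) * G = G * poly_mat n p A"
    unfolding transpose_poly_mat[OF A(1)] using A by (intro poly_mat_intertwine) auto
  moreover have "poly_mat n p A * J = J * poly_mat n p A"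
    using A by (intro poly_mat_intertwine) auto
  ultimately show ?thesis
    using A unfolding hermitian_endo_def by simp
qed

lemma mat_subspace_u_alg: "mat_subspace n (u_alg n G J)"
  unfolding mat_subspace_def
proof (intro conjI ballI allI)
  show "u_alg n G J \<subseteq> carrier_mat n n"
    unfolding u_alg_def by blast
  show "0\<^sub>m n n \<in> u_alg n G J"
    unfolding u_alg_def by (auto intro!: eq_matI)
next
  fix X Y a b assume "X \<in> u_alg n G J" "Y \<in> u_alg n G J"
  then have X: "X \<in> carrier_mat n n" "X * J = J * X" "transpose_mat X * G = - (G * X)"
    and Y: "Y \<in> carrier_mat n n" "Y * J = J * Y" "transpose_mat Y * G = - (G * Y)"
    unfolding u_alg_def by auto
  have "(a \<cdot>\<^sub>m X + b \<cdot>\<^sub>m Y) * J = J * (a \<cdot>\<^sub>m X + b \<cdot>\<^sub>m Y)"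
    using X Y by (simp add: add_mult_distrib_mat[of _ n n _ _ n] mult_add_distrib_mat[of _ n n _ n]
        mult_smult_assoc_mat[of _ n n _ n] mult_smult_distrib[of _ n n _ n])
  moreover have "transpose_mat (c \<cdot>\<^sub>m Z) = c \<cdot>\<^sub>m transpose_mat Z" for c and Z :: "real mat"
    by (intro eq_matI) auto
  then have "transpose_mat (a \<cdot>\<^sub>m X + b \<cdot>\<^sub>m Y) * G = - (G * (a \<cdot>\<^sub>m X + b \<cdot>\<^sub>m Y))"
    using X Y by (simp add: transpose_add[of _ n n] add_mult_distrib_mat[of _ n n _ _ n] mult_add_distrib_mat[of _ n n _ n]
        mult_smult_assoc_mat[of _ n n _ n] mult_smult_distrib[of _ n n _ n]) (intro eq_matI, auto)
  ultimately show "a \<cdot>\<^sub>m X + b \<cdot>\<^sub>m Y \<in> u_alg n G J"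
    using X Y unfolding u_alg_def by simp
qed

lemma commutator_ratio_witness_eigenvalues:
  assumes herm_A: "hermitian_endo n G J A" and eig: "eigenvalue A li" "eigenvalue A lj" and "li \<noteq> lj"
  obtains X where "X \<in> u_alg n G J"
    "commutator X (poly_mat n p A) = ((poly p li - poly p lj) / (li - lj)) \<cdot>\<^sub>m commutator X A"
    "commutator X A \<noteq> 0\<^sub>m n n"
proof -
  have "A \<in> carrier_mat n n"
    using herm_A unfolding hermitian_endo_def by simp
  then obtain vi vj where vi: "vi \<in> carrier_vec n" "vi \<noteq> 0\<^sub>v n" "A *\<^sub>v vi = li \<cdot>\<^sub>v vi"
    and vj: "vj \<in> carrier_vec n" "vj \<noteq> 0\<^sub>v n" "A *\<^sub>v vj = lj \<cdot>\<^sub>v vj"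
    using eig unfolding eigenvalue_def eigenvector_def by auto
  define S where "S = herm_dyad vj vi + herm_dyad vi vj"
  define X where "X = herm_dyad vj vi - herm_dyad vi vj"
  have "commutator X A = (lj - li) \<cdot>\<^sub>m S"
    unfolding X_def S_def using herm_A vj(1) vi(1) vj(3) vi(3) by (rule commutator_skew_herm_dyad_eigenvectors)
  moreover have "S \<noteq> 0\<^sub>m n n"
    unfolding S_def using sym_herm_dyad_nonzero[OF herm_A vj(1,2) vi(1,2) vj(3) vi(3)] \<open>li \<noteq> lj\<close> by simp
  ultimately have "commutator X A \<noteq> 0\<^sub>m n n"
    using \<open>li \<noteq> lj\<close> by (simp add: smult_mat_eq_zero_iff S_def)
  have "commutator X (poly_mat n p A) = (poly p lj - poly p li) \<cdot>\<^sub>m S"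
    unfolding X_def S_def
    using commutator_skew_herm_dyad_eigenvectors[OF hermitian_endo_poly_mat[OF herm_A] vj(1) vi(1)
        poly_mat_mult_eigenvector[OF \<open>A \<in> carrier_mat n n\<close> vj(1,3)]
        poly_mat_mult_eigenvector[OF \<open>A \<in> carrier_mat n n\<close> vi(1,3)]] .
  also have "\<dots> = ((poly p li - poly p lj) / (li - lj)) \<cdot>\<^sub>m commutator X A"
  proof -
    have "poly p lj - poly p li = (poly p li - poly p lj) / (li - lj) * (lj - li)"
      using \<open>li \<noteq> lj\<close> by (simp add: field_simps)
    then show ?thesis
      unfolding \<open>commutator X A = (lj - li) \<cdot>\<^sub>m S\<close> S_def by (intro eq_matI) auto
  qed
  finally have "commutator X (poly_mat n p A) = ((poly p li - poly p lj) / (li - lj)) \<cdot>\<^sub>m commutator X A" .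
  from skew_herm_dyad_in_u_alg[OF vj(1) vi(1)] this \<open>commutator X A \<noteq> 0\<^sub>m n n\<close> show ?thesis
    unfolding X_def[symmetric] by (rule that)
qed

lemma commutator_ratio_witness_jordan_block:
  assumes herm_A: "hermitian_endo n G J A" and block: "has_nontrivial_jordan_block A l"
  obtains X where "X \<in> u_alg n G J"
    "commutator X (poly_mat n p A) = poly (pderiv p) l \<cdot>\<^sub>m commutator X A"
    "commutator X A \<noteq> 0\<^sub>m n n"
proof -
  have "A \<in> carrier_mat n n"
    using herm_A unfolding hermitian_endo_def by simp
  then obtain v w where vw: "v \<in> carrier_vec n" "w \<in> carrier_vec n" "w \<noteq> 0\<^sub>v n"
    and Av: "A *\<^sub>v v = l \<cdot>\<^sub>v v + w" and Aw: "A *\<^sub>v w = l \<cdot>\<^sub>v w"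
    using block by (rule jordan_chain_if_nontrivial_jordan_block)
  define X where "X = herm_dyad w v - herm_dyad v w"
  have "commutator X A = (- 2 * 1) \<cdot>\<^sub>m herm_dyad w w"
    unfolding X_def using herm_A vw(1,2) Aw by (rule commutator_skew_herm_dyad_jordan_chain) (simp add: Av)
  moreover have "herm_dyad w w \<noteq> 0\<^sub>m n n"
    using vw by (intro herm_dyad_nonzero) auto
  ultimately have "commutator X A \<noteq> 0\<^sub>m n n"
    by (simp add: smult_mat_eq_zero_iff)
  have "commutator X (poly_mat n p A) = (- 2 * poly (pderiv p) l) \<cdot>\<^sub>m herm_dyad w w"
    unfolding X_def
    using commutator_skew_herm_dyad_jordan_chain[OF hermitian_endo_poly_mat[OF herm_A] vw(1,2)
        poly_mat_mult_eigenvector[OF \<open>A \<in> carrier_mat n n\<close> vw(2) Aw]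
        poly_mat_mult_jordan_chain[OF \<open>A \<in> carrier_mat n n\<close> vw(1,2) Av Aw]] .
  also have "\<dots> = poly (pderiv p) l \<cdot>\<^sub>m commutator X A"
    unfolding \<open>commutator X A = (- 2 * 1) \<cdot>\<^sub>m herm_dyad w w\<close> by (intro eq_matI) auto
  finally have "commutator X (poly_mat n p A) = poly (pderiv p) l \<cdot>\<^sub>m commutator X A" .
  from skew_herm_dyad_in_u_alg[OF vw(2,1)] this \<open>commutator X A \<noteq> 0\<^sub>m n n\<close> show ?thesis
    unfolding X_def[symmetric] by (rule that)
qed

end

theorem propositionA3:
  fixes n :: nat and G J A :: "real mat" and p :: "real poly"
    and R :: "real mat \<Rightarrow> real mat"
  assumes "pseudo_hermitian n G J"
    and "hermitian_endo n G J A"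
    and "linear_on (u_alg n G J) R"
    and "\<And>X. X \<in> u_alg n G J \<Longrightarrow>
           commutator (R X) A = commutator X (poly_mat n p A)"
  shows "(\<forall>li lj. eigenvalue A li \<and> eigenvalue A lj \<and> li \<noteq> lj \<longrightarrow>
            op_eigenvalue n (u_alg n G J) R ((poly p li - poly p lj) / (li - lj)))
       \<and> (\<forall>li. has_nontrivial_jordan_block A li \<longrightarrow>
            op_eigenvalue n (u_alg n G J) R (poly (pderiv p) li))"
proof -
  interpret pseudo_hermitian_space n G J
    using assms(1) by unfold_locales
  have "A \<in> carrier_mat n n"
    using assms(2) unfolding hermitian_endo_def by simp
  have criterion: "op_eigenvalue n (u_alg n G J) R mu"
    if "X \<in> u_alg n G J" "commutator X (poly_mat n p A) = mu \<cdot>\<^sub>m commutator X A"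
      "commutator X A \<noteq> 0\<^sub>m n n" for X mu
    using mat_subspace_u_alg \<open>A \<in> carrier_mat n n\<close> assms(3,4) that
    by (rule op_eigenvalue_if_commutator_eigenvector)
  show ?thesis
  proof (intro conjI allI impI)
    fix li lj assume "eigenvalue A li \<and> eigenvalue A lj \<and> li \<noteq> lj"
    then obtain X where "X \<in> u_alg n G J"
      "commutator X (poly_mat n p A) = ((poly p li - poly p lj) / (li - lj)) \<cdot>\<^sub>m commutator X A"
      "commutator X A \<noteq> 0\<^sub>m n n"
      using commutator_ratio_witness_eigenvalues[OF assms(2)] by blast
    then show "op_eigenvalue n (u_alg n G J) R ((poly p li - poly p lj) / (li - lj))"
      by (rule criterion)
  next
    fix l assume "has_nontrivial_jordan_block A l"
    then obtain X where "X \<in> u_alg n G J"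
      "commutator X (poly_mat n p A) = poly (pderiv p) l \<cdot>\<^sub>m commutator X A"
      "commutator X A \<noteq> 0\<^sub>m n n"
      by (rule commutator_ratio_witness_jordan_block[OF assms(2)])
    then show "op_eigenvalue n (u_alg n G J) R (poly (pderiv p) l)"
      by (rule criterion)
  qed
qed

end
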